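(* Let $R$ be a ring (associative with identity), let $m,n\geq 1$ and $k\geq 2$ be integers. If the matrix rings $M_n(R)$ and $M_m(R)$ are both $k$-clean, then so is $M_{n+m}(R)$.
   Context: For a positive integer $k$, a ring $S$ is $k$-clean if every element of $S$ can be written as $e+u_1+\cdots+u_k$ with $e=e^2\in S$ and $u_1,\dots,u_k$ units of $S$. *)

theory Defs
  imports "HOL-Algebra.Ring" "Jordan_Normal_Form.Matrix"
begin

definition k_clean :: "('c, 'd) ring_scheme \<Rightarrow> nat \<Rightarrow> bool" where
  "k_clean S k \<longleftrightarrow>
     (\<forall>x \<in> carrier S. \<exists>e u. e \<in> carrier S \<and> e \<otimes>\<^bsub>S\<^esub> e = e \<and>
        (\<forall>i<k. u i \<in> Units S) \<and>
        x = e \<oplus>\<^bsub>S\<^esub> (\<Oplus>\<^bsub>S\<^esub> i\<in>{..<k}. u i))"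

end

theory Submission
  imports Defs
begin

(* Write A = [A1 A2; A3 A4] in blocks and decompose A1 = e1 + u1_0 + ... + u1_(k-1) and
   A4 = e2 + u2_0 + ... + u2_(k-1). Then e = diag(e1, e2) is idempotent, and the off-diagonal
   blocks are absorbed into two of the k >= 2 units: [u1_0 A2; 0 u2_0] is block upper triangular
   and [u1_1 0; A3 u2_1] block lower triangular, so both are invertible since their diagonal
   blocks are; the remaining units are diag(u1_i, u2_i). *)

lemma Units_ring_mat_iff:
  "A \<in> Units (ring_mat TYPE('a::semiring_1) n z) \<longleftrightarrow>
     A \<in> carrier_mat n n \<and> (\<exists>B \<in> carrier_mat n n. A * B = 1\<^sub>m n \<and> B * A = 1\<^sub>m n)"
  unfolding Units_def ring_mat_simps by auto

lemma left_minus_mat: "- (A :: 'a::group_add mat) + A = 0\<^sub>m (dim_row A) (dim_col A)"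
  by (rule eq_matI) auto

lemma right_minus_mat: "(A :: 'a::group_add mat) + - A = 0\<^sub>m (dim_row A) (dim_col A)"
  by (rule eq_matI) auto

lemma mult_inverse_cancel_left_mat:
  fixes A :: "'a::semiring_1 mat"
  assumes "A \<in> carrier_mat n n" "B \<in> carrier_mat n n" "A * B = 1\<^sub>m n" "dim_row C = n"
  shows "A * (B * C) = C"
proof -
  have C: "C \<in> carrier_mat n (dim_col C)"
    using assms(4) refl by (rule carrier_matI)
  have "A * (B * C) = A * B * C"
    by (rule assoc_mult_mat[OF assms(1,2) C, symmetric])
  also have "\<dots> = C"
    unfolding assms(3) by (rule left_mult_one_mat[OF C])
  finally show ?thesis .
qed

lemma mult_inverse_cancel_right_mat:
  fixes A :: "'a::semiring_1 mat"
  assumes "A \<in> carrier_mat n n" "B \<in> carrier_mat n n" "A * B = 1\<^sub>m n" "dim_col C = n"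
  shows "C * A * B = C"
proof -
  have C: "C \<in> carrier_mat (dim_row C) n"
    using refl assms(4) by (rule carrier_matI)
  have "C * A * B = C * (A * B)"
    by (rule assoc_mult_mat[OF C assms(1,2)])
  also have "\<dots> = C"
    unfolding assms(3) by (rule right_mult_one_mat[OF C])
  finally show ?thesis .
qed

lemma four_block_mat_upper_Units:
  fixes X :: "'a::ring_1 mat"
  assumes "U \<in> Units (ring_mat TYPE('a) n z)" "V \<in> Units (ring_mat TYPE('a) m z)"
    and X: "X \<in> carrier_mat n m"
  shows "four_block_mat U X (0\<^sub>m m n) V \<in> Units (ring_mat TYPE('a) (n + m) z)"
proof -
  obtain U' where U': "U \<in> carrier_mat n n" "U' \<in> carrier_mat n n" "U * U' = 1\<^sub>m n" "U' * U = 1\<^sub>m n"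
    using assms(1) unfolding Units_ring_mat_iff by blast
  obtain V' where V': "V \<in> carrier_mat m m" "V' \<in> carrier_mat m m" "V * V' = 1\<^sub>m m" "V' * V = 1\<^sub>m m"
    using assms(2) unfolding Units_ring_mat_iff by blast
  define Y where "Y = - (U' * X * V')"
  have Y: "Y \<in> carrier_mat n m"
    using U' V' X unfolding Y_def by simp
  have "U * Y + X * V' = 0\<^sub>m n m"
    using U' V' X unfolding Y_def by (simp add: mult_inverse_cancel_left_mat left_minus_mat)
  then have "four_block_mat U X (0\<^sub>m m n) V * four_block_mat U' Y (0\<^sub>m m n) V' = 1\<^sub>m (n + m)"
    using U' V' X Y
    by (subst mult_four_block_mat[OF U'(1) X zero_carrier_mat V'(1) U'(2) Y zero_carrier_mat V'(2)]) simp_all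
  moreover have "U' * X + Y * V = 0\<^sub>m n m"
    using U' V' X unfolding Y_def by (simp add: mult_inverse_cancel_right_mat right_minus_mat del: assoc_mult_mat)
  then have "four_block_mat U' Y (0\<^sub>m m n) V' * four_block_mat U X (0\<^sub>m m n) V = 1\<^sub>m (n + m)"
    using U' V' X Y
    by (subst mult_four_block_mat[OF U'(2) Y zero_carrier_mat V'(2) U'(1) X zero_carrier_mat V'(1)]) simp_all
  ultimately show ?thesis
    using U' V' X Y unfolding Units_ring_mat_iff
    by (intro conjI bexI[of _ "four_block_mat U' Y (0\<^sub>m m n) V'"]) auto
qed

lemma four_block_mat_lower_Units:
  fixes X :: "'a::ring_1 mat"
  assumes "U \<in> Units (ring_mat TYPE('a) n z)" "V \<in> Units (ring_mat TYPE('a) m z)"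
    and X: "X \<in> carrier_mat m n"
  shows "four_block_mat U (0\<^sub>m n m) X V \<in> Units (ring_mat TYPE('a) (n + m) z)"
proof -
  obtain U' where U': "U \<in> carrier_mat n n" "U' \<in> carrier_mat n n" "U * U' = 1\<^sub>m n" "U' * U = 1\<^sub>m n"
    using assms(1) unfolding Units_ring_mat_iff by blast
  obtain V' where V': "V \<in> carrier_mat m m" "V' \<in> carrier_mat m m" "V * V' = 1\<^sub>m m" "V' * V = 1\<^sub>m m"
    using assms(2) unfolding Units_ring_mat_iff by blast
  define Y where "Y = - (V' * X * U')"
  have Y: "Y \<in> carrier_mat m n"
    using U' V' X unfolding Y_def by simp
  have "X * U' + V * Y = 0\<^sub>m m n"
    using U' V' X unfolding Y_def by (simp add: mult_inverse_cancel_left_mat right_minus_mat)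
  then have "four_block_mat U (0\<^sub>m n m) X V * four_block_mat U' (0\<^sub>m n m) Y V' = 1\<^sub>m (n + m)"
    using U' V' X Y
    by (subst mult_four_block_mat[OF U'(1) zero_carrier_mat X V'(1) U'(2) zero_carrier_mat Y V'(2)]) simp_all
  moreover have "Y * U + V' * X = 0\<^sub>m m n"
    using U' V' X unfolding Y_def by (simp add: mult_inverse_cancel_right_mat left_minus_mat del: assoc_mult_mat)
  then have "four_block_mat U' (0\<^sub>m n m) Y V' * four_block_mat U (0\<^sub>m n m) X V = 1\<^sub>m (n + m)"
    using U' V' X Y
    by (subst mult_four_block_mat[OF U'(2) zero_carrier_mat Y V'(2) U'(1) zero_carrier_mat X V'(1)]) simp_all
  ultimately show ?thesis
    using U' V' X Y unfolding Units_ring_mat_iff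
    by (intro conjI bexI[of _ "four_block_mat U' (0\<^sub>m n m) Y V'"]) auto
qed

(* HOL-Algebra's finsum needs a ring structure, which rectangular matrices lack: off-diagonal
   blocks are summed in the additive monoid of n x m matrices instead. *)
definition finsum_mat :: "'a::monoid_add itself \<Rightarrow> nat \<Rightarrow> nat \<Rightarrow> ('i \<Rightarrow> 'a mat) \<Rightarrow> 'i set \<Rightarrow> 'a mat"
  where "finsum_mat ty nr nc = finprod (monoid_mat ty nr nc)"

lemma monoid_mat_simps:
  "mult (monoid_mat ty nr nc) = (+)"
  "carrier (monoid_mat ty nr nc) = carrier_mat nr nc"
  "one (monoid_mat ty nr nc) = 0\<^sub>m nr nc"
  unfolding monoid_mat_def by simp_all

lemmas finsum_mat_empty =
  comm_monoid.finprod_empty[OF comm_monoid_mat, folded finsum_mat_def, unfolded monoid_mat_simps]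

lemmas finsum_mat_insert =
  comm_monoid.finprod_insert[OF comm_monoid_mat, folded finsum_mat_def, unfolded monoid_mat_simps]

lemmas finsum_mat_closed =
  comm_monoid.finprod_closed[OF comm_monoid_mat, folded finsum_mat_def, unfolded monoid_mat_simps]

lemmas finsum_mat_singleton =
  comm_monoid.finprod_singleton_swap[OF comm_monoid_mat, folded finsum_mat_def, unfolded monoid_mat_simps]

lemma finsum_ring_mat: "finsum (ring_mat ty n z) f I = finsum_mat ty n n f I"
  unfolding finsum_def finsum_mat_def finprod_def by (simp add: ring_mat_def monoid_mat_def)

lemma finsum_mat_four_block_mat:
  fixes a :: "'i \<Rightarrow> 'a::comm_monoid_add mat"
  assumes "finite I"
    and "a \<in> I \<rightarrow> carrier_mat nr1 nc1" "b \<in> I \<rightarrow> carrier_mat nr1 nc2"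
    and "c \<in> I \<rightarrow> carrier_mat nr2 nc1" "d \<in> I \<rightarrow> carrier_mat nr2 nc2"
  shows "finsum_mat TYPE('a) (nr1 + nr2) (nc1 + nc2) (\<lambda>i. four_block_mat (a i) (b i) (c i) (d i)) I =
    four_block_mat (finsum_mat TYPE('a) nr1 nc1 a I) (finsum_mat TYPE('a) nr1 nc2 b I)
      (finsum_mat TYPE('a) nr2 nc1 c I) (finsum_mat TYPE('a) nr2 nc2 d I)"
  using assms
proof (induction I rule: finite_induct)
  case empty
  then show ?case by (simp add: finsum_mat_empty)
next
  case (insert x F)
  then have blocks: "a x \<in> carrier_mat nr1 nc1" "b x \<in> carrier_mat nr1 nc2"
    "c x \<in> carrier_mat nr2 nc1" "d x \<in> carrier_mat nr2 nc2"
    by auto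
  have sums: "finsum_mat TYPE('a) nr1 nc1 a F \<in> carrier_mat nr1 nc1"
    "finsum_mat TYPE('a) nr1 nc2 b F \<in> carrier_mat nr1 nc2"
    "finsum_mat TYPE('a) nr2 nc1 c F \<in> carrier_mat nr2 nc1"
    "finsum_mat TYPE('a) nr2 nc2 d F \<in> carrier_mat nr2 nc2"
    using insert.prems by (auto intro!: finsum_mat_closed)
  show ?case
    using insert by (simp add: finsum_mat_insert Pi_iff add_four_block_mat[OF blocks sums])
qed

lemma finsum_four_block_mat_delta:
  fixes B :: "'a::semiring_1 mat"
  assumes "finite I" "i \<in> I" "j \<in> I"
    and "u1 \<in> I \<rightarrow> carrier_mat n n" "u2 \<in> I \<rightarrow> carrier_mat m m"
    and "B \<in> carrier_mat n m" "C \<in> carrier_mat m n"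
  shows "finsum (ring_mat TYPE('a) (n + m) z)
      (\<lambda>l. four_block_mat (u1 l) (if l = i then B else 0\<^sub>m n m) (if l = j then C else 0\<^sub>m m n) (u2 l)) I =
    four_block_mat (finsum (ring_mat TYPE('a) n z) u1 I) B C (finsum (ring_mat TYPE('a) m z) u2 I)"
  using assms
  by (simp add: finsum_ring_mat finsum_mat_four_block_mat finsum_mat_singleton Pi_iff)

lemma four_block_mat_delta_Units:
  fixes B :: "'a::ring_1 mat"
  assumes "U \<in> Units (ring_mat TYPE('a) n z)" "V \<in> Units (ring_mat TYPE('a) m z)"
    and "B \<in> carrier_mat n m" "C \<in> carrier_mat m n" "i \<noteq> j"
  shows "four_block_mat U (if l = i then B else 0\<^sub>m n m) (if l = j then C else 0\<^sub>m m n) V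
    \<in> Units (ring_mat TYPE('a) (n + m) z)"
proof (cases "l = j")
  case True
  with four_block_mat_lower_Units[OF assms(1,2,4)] show ?thesis
    using assms(5) by auto
next
  case False
  have "(if l = i then B else 0\<^sub>m n m) \<in> carrier_mat n m"
    using assms(3) by simp
  with four_block_mat_upper_Units[OF assms(1,2)] show ?thesis
    using False by auto
qed

lemma four_block_mat_clean_decomposition:
  fixes A2 :: "'a::ring_1 mat" and k :: nat
  assumes "1 < k"
    and e1: "e1 \<in> carrier_mat n n" "e1 * e1 = e1" and e2: "e2 \<in> carrier_mat m m" "e2 * e2 = e2"
    and u1: "\<forall>i<k. u1 i \<in> Units (ring_mat TYPE('a) n z)"
    and u2: "\<forall>i<k. u2 i \<in> Units (ring_mat TYPE('a) m z)"
    and A2: "A2 \<in> carrier_mat n m" and A3: "A3 \<in> carrier_mat m n"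
  shows "\<exists>e u. e \<in> carrier_mat (n + m) (n + m) \<and> e * e = e \<and>
    (\<forall>i<k. u i \<in> Units (ring_mat TYPE('a) (n + m) z)) \<and>
    four_block_mat (e1 + finsum (ring_mat TYPE('a) n z) u1 {..<k}) A2 A3
      (e2 + finsum (ring_mat TYPE('a) m z) u2 {..<k}) = e + finsum (ring_mat TYPE('a) (n + m) z) u {..<k}"
proof -
  define e where "e = four_block_mat e1 (0\<^sub>m n m) (0\<^sub>m m n) e2"
  define u where "u i = four_block_mat (u1 i) (if i = 0 then A2 else 0\<^sub>m n m)
      (if i = 1 then A3 else 0\<^sub>m m n) (u2 i)" for i
  have "e \<in> carrier_mat (n + m) (n + m)"
    unfolding e_def using e1 e2 by simp
  moreover have "e * e = e"
    unfolding e_def using e1 e2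
    by (subst mult_four_block_mat[OF e1(1) zero_carrier_mat zero_carrier_mat e2(1)
          e1(1) zero_carrier_mat zero_carrier_mat e2(1)]) simp_all
  moreover have "\<forall>i<k. u i \<in> Units (ring_mat TYPE('a) (n + m) z)"
    unfolding u_def using u1 u2 A2 A3 by (simp add: four_block_mat_delta_Units)
  moreover have "four_block_mat (e1 + finsum (ring_mat TYPE('a) n z) u1 {..<k}) A2 A3
      (e2 + finsum (ring_mat TYPE('a) m z) u2 {..<k}) = e + finsum (ring_mat TYPE('a) (n + m) z) u {..<k}"
  proof -
    have "u1 \<in> {..<k} \<rightarrow> carrier_mat n n" "u2 \<in> {..<k} \<rightarrow> carrier_mat m m"
      using u1 u2 unfolding Units_ring_mat_iff by blast+
    then have sums: "finsum (ring_mat TYPE('a) n z) u1 {..<k} \<in> carrier_mat n n"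
        "finsum (ring_mat TYPE('a) m z) u2 {..<k} \<in> carrier_mat m m"
      unfolding finsum_ring_mat by (simp_all only: finsum_mat_closed)
    have "finsum (ring_mat TYPE('a) (n + m) z) u {..<k} = four_block_mat
        (finsum (ring_mat TYPE('a) n z) u1 {..<k}) A2 A3 (finsum (ring_mat TYPE('a) m z) u2 {..<k})"
      unfolding u_def using \<open>1 < k\<close> A2 A3 \<open>u1 \<in> _\<close> \<open>u2 \<in> _\<close>
      by (intro finsum_four_block_mat_delta) auto
    then show ?thesis
      unfolding e_def
      using add_four_block_mat[OF e1(1) zero_carrier_mat zero_carrier_mat e2(1) sums(1) A2 A3 sums(2)]
      by (simp only: left_add_zero_mat[OF A2] left_add_zero_mat[OF A3])
  qed
  ultimately show ?thesis
    by blast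
qed

theorem lemma5:
  fixes n m k :: nat
  assumes "n \<ge> 1" and "m \<ge> 1" and "k \<ge> 2"
    and "k_clean (ring_mat TYPE('a :: ring_1) n ()) k"
    and "k_clean (ring_mat TYPE('a) m ()) k"
  shows "k_clean (ring_mat TYPE('a) (n + m) ()) k"
  unfolding k_clean_def ring_mat_simps
proof (intro ballI)
  fix A :: "'a mat"
  assume "A \<in> carrier_mat (n + m) (n + m)"
  then obtain A1 A2 A3 A4 where "split_block A n n = (A1, A2, A3, A4)"
    and "dim_row A = n + m" "dim_col A = n + m"
    by (cases "split_block A n n") auto
  note blocks = split_block[OF this]
  obtain e1 u1 where e1: "e1 \<in> carrier_mat n n" "e1 * e1 = e1"
    and u1: "\<forall>i<k. u1 i \<in> Units (ring_mat TYPE('a) n ())"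
    and A1: "A1 = e1 + finsum (ring_mat TYPE('a) n ()) u1 {..<k}"
    using assms(4) blocks(1) unfolding k_clean_def ring_mat_simps by blast
  obtain e2 u2 where e2: "e2 \<in> carrier_mat m m" "e2 * e2 = e2"
    and u2: "\<forall>i<k. u2 i \<in> Units (ring_mat TYPE('a) m ())"
    and A4: "A4 = e2 + finsum (ring_mat TYPE('a) m ()) u2 {..<k}"
    using assms(5) blocks(4) unfolding k_clean_def ring_mat_simps by blast
  have "1 < k"
    using assms(3) by simp
  from four_block_mat_clean_decomposition[OF this e1 e2 u1 u2 blocks(2,3)]
  show "\<exists>e u. e \<in> carrier_mat (n + m) (n + m) \<and> e * e = e \<and>
      (\<forall>i<k. u i \<in> Units (ring_mat TYPE('a) (n + m) ())) \<and>
      A = e + finsum (ring_mat TYPE('a) (n + m) ()) u {..<k}"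
    unfolding blocks(5) A1 A4 .
qed

end
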